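(* Let $G_1,G_2$ be disjoint graphs, $u\in V(G_1)$, $w\in V(G_2)$, $H=G_1uwG_2$, and $\Delta\nu:=\nu(H)-\nu(G_1)-\nu(G_2)$. For any pattern $\mathbf{s}$ on $H$ with $N(H)\mathbf{s}=\mathbf{1}$, let $\mathbf{s}_1,\mathbf{s}_2$ be its restrictions to $V(G_1)$, $V(G_2)$. Then, according to $(\mathcal{A}_{G_1}(u),\mathcal{A}_{G_2}(w))$: (i) $(0,0)$: $\mathcal{A}_H(u)=0$, $\mathcal{A}_H(w)=0$, $\Delta\nu=0$, and every such $\mathbf{s}$ has $N(G_1)\mathbf{s}_1=\mathbf{1}$, $N(G_2)\mathbf{s}_2=\mathbf{1}$. (ii) $(0,1)$: $\mathcal{A}_H(u)=0$, $\mathcal{A}_H(w)=1$, $\Delta\nu=0$, and every such $\mathbf{s}$ has $N(G_1)\mathbf{s}_1=\overline{\mathbf{c}_u}$, $N(G_2)\mathbf{s}_2=\mathbf{1}$. (iii) $(0,-1)$: $\mathcal{A}_H(u)=0$, $\mathcal{A}_H(w)=-1$, $\Delta\nu=0$; every such $\mathbf{s}$ has $N(G_2)\mathbf{s}_2=\mathbf{1}$, and $N(G_1)\mathbf{s}_1=\mathbf{1}$ if $\mathbf{s}(w)=0$, $N(G_1)\mathbf{s}_1=\overline{\mathbf{c}_u}$ if $\mathbf{s}(w)=1$. (iv) $(1,1)$: $\mathcal{A}_H(u)=-1$, $\mathcal{A}_H(w)=-1$, $\Delta\nu=1$; for every such $\mathbf{s}$, either $\mathbf{s}(u)=0,\mathbf{s}(w)=1$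 and $N(G_1)\mathbf{s}_1=\overline{\mathbf{c}_u}$, $N(G_2)\mathbf{s}_2=\mathbf{1}$, or $\mathbf{s}(u)=1,\mathbf{s}(w)=0$ and $N(G_1)\mathbf{s}_1=\mathbf{1}$, $N(G_2)\mathbf{s}_2=\overline{\mathbf{c}_w}$. (v) $(1,-1)$: $\mathcal{A}_H(u)=0$, $\mathcal{A}_H(w)=1$, $\Delta\nu=-1$, and every such $\mathbf{s}$ has $N(G_1)\mathbf{s}_1=\overline{\mathbf{c}_u}$, $N(G_2)\mathbf{s}_2=\mathbf{1}$. (vi) $(-1,-1)$: $\mathcal{A}_H(u)=0$, $\mathcal{A}_H(w)=0$, $\Delta\nu=-2$, and every such $\mathbf{s}$ has $N(G_1)\mathbf{s}_1=\mathbf{1}$, $N(G_2)\mathbf{s}_2=\mathbf{1}$. The remaining cases $(1,0)$, $(-1,0)$, $(-1,1)$ are obtained from (ii), (iii), (v) by interchanging the roles of $(G_1,u)$ and $(G_2,w)$. In compact form: $\Delta\nu=-2$ if $\mathcal{A}_{G_1}(u)=\mathcal{A}_{G_2}(w)=-1$ and $\Delta\nu=\mathcal{A}_{G_1}(u)\mathcal{A}_{G_2}(w)$ otherwise; and $\mathcal{A}_H(u)\equiv\mathcal{A}_{G_1}(u)(1+\mathcal{A}_{G_2}(w)) \pmod 3$, $\mathcal{A}_H(w)\equiv\mathcal{A}_{G_2}(w)(1+\mathcal{A}_{G_1}(u)) \pmod 3$ (with activation numbers in $\{-1,0,1\}$).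
   Context: For a finite simple graph $G$ with vertex set $\{v_1,\dots,v_n\}$, the closed adjacency matrix $N(G)$ is the $n\times n$ matrix over $\mathbb{Z}_2$ whose $(i,j)$ entry is $1$ iff $i=j$ or $v_i$ is adjacent to $v_j$. Vectors in $\mathbb{Z}_2^{V(G)}$ are patterns/configurations; $\mathbf{p}$ solves $\mathbf{c}$ if $N(G)\mathbf{p}=\mathbf{c}$. The nullity is $\nu(G):=\dim\operatorname{Ker}(N(G))$; elements of the kernel are null patterns. $\mathbf{1}$ denotes the all-ones configuration (of whichever graph is meant); it is solvable on every graph. For a vertex $u$, $\mathbf{c}_u$ is the configuration with $\mathbf{c}_u(v)=1$ iff $v=u$, and $\overline{\mathbf{c}_u}:=\mathbf{c}_u+\mathbf{1}$. A vertex $v$ is half-activated if $\boldsymbol{\ell}(v)=1$ for some null pattern $\boldsymbol{\ell}$; otherwise it is always-activated if $\mathbf{p}(v)=1$ for every $\mathbf{p}$ with $N(G)\mathbf{p}=\mathbf{1}$, and never-activated if $\mathbf{p}(v)=0$ for every such $\mathbf{p}$. The activation number $\mathcal{A}_G(v)$ is $1$, $0$, $-1$ for always-, never-, half-activated respectively. $G_1uwG_2$ denotes the graph obtained from the disjoint union of $G_1,G_2$ by adding the edge $uw$. *)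

theory Defs
  imports Main "HOL.Vector_Spaces" "HOL-Library.Z2" "HOL-Library.Function_Algebras"
begin

definition sgraph :: "'a set \<Rightarrow> ('a \<Rightarrow> 'a \<Rightarrow> bool) \<Rightarrow> bool" where
  "sgraph V E \<longleftrightarrow> finite V \<and> (\<forall>x y. E x y \<longrightarrow> x \<in> V \<and> y \<in> V)
     \<and> (\<forall>x y. E x y \<longrightarrow> E y x) \<and> (\<forall>x. \<not> E x x)"

definition patterns :: "'a set \<Rightarrow> ('a \<Rightarrow> bit) set" where
  "patterns V = {p. \<forall>x. x \<notin> V \<longrightarrow> p x = 0}"

text \<open>(N(G) p)(v) : the closed-adjacency matrix applied to p, at vertex v.\<close>
definition Nmul :: "'a set \<Rightarrow> ('a \<Rightarrow> 'a \<Rightarrow> bool) \<Rightarrow> ('a \<Rightarrow> bit) \<Rightarrow> 'a \<Rightarrow> bit" where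
  "Nmul V E p v = (\<Sum>x\<in>V. if x = v \<or> E v x then p x else 0)"

definition solves :: "'a set \<Rightarrow> ('a \<Rightarrow> 'a \<Rightarrow> bool) \<Rightarrow> ('a \<Rightarrow> bit) \<Rightarrow> ('a \<Rightarrow> bit) \<Rightarrow> bool" where
  "solves V E p c \<longleftrightarrow> p \<in> patterns V \<and> (\<forall>v\<in>V. Nmul V E p v = c v)"

definition null_patterns :: "'a set \<Rightarrow> ('a \<Rightarrow> 'a \<Rightarrow> bool) \<Rightarrow> ('a \<Rightarrow> bit) set" where
  "null_patterns V E = {p. solves V E p (\<lambda>_. 0)}"

definition nullity :: "'a set \<Rightarrow> ('a \<Rightarrow> 'a \<Rightarrow> bool) \<Rightarrow> nat" where
  "nullity V E = vector_space.dim (\<lambda>(c::bit) f x. c * f x) (null_patterns V E)"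

definition ones :: "'a \<Rightarrow> bit" where
  "ones = (\<lambda>_. 1)"

definition cfg :: "'a \<Rightarrow> 'a \<Rightarrow> bit" where
  "cfg u = (\<lambda>v. if v = u then 1 else 0)"

definition cbar :: "'a \<Rightarrow> 'a \<Rightarrow> bit" where
  "cbar u = (\<lambda>v. cfg u v + 1)"

definition half_activated :: "'a set \<Rightarrow> ('a \<Rightarrow> 'a \<Rightarrow> bool) \<Rightarrow> 'a \<Rightarrow> bool" where
  "half_activated V E v \<longleftrightarrow> (\<exists>l\<in>null_patterns V E. l v = 1)"

definition always_activated :: "'a set \<Rightarrow> ('a \<Rightarrow> 'a \<Rightarrow> bool) \<Rightarrow> 'a \<Rightarrow> bool" where
  "always_activated V E v \<longleftrightarrow> \<not> half_activated V E v \<and>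
     (\<forall>p. solves V E p ones \<longrightarrow> p v = 1)"

definition never_activated :: "'a set \<Rightarrow> ('a \<Rightarrow> 'a \<Rightarrow> bool) \<Rightarrow> 'a \<Rightarrow> bool" where
  "never_activated V E v \<longleftrightarrow> \<not> half_activated V E v \<and>
     (\<forall>p. solves V E p ones \<longrightarrow> p v = 0)"

text \<open>Activation number: 1 always, 0 never, -1 half-activated.  (Since the all-ones
  configuration is solvable on every graph, every vertex falls in exactly one class.)\<close>
definition activation :: "'a set \<Rightarrow> ('a \<Rightarrow> 'a \<Rightarrow> bool) \<Rightarrow> 'a \<Rightarrow> int" where
  "activation V E v = (if half_activated V E v then -1
      else if always_activated V E v then 1 else 0)"

definition join_edges :: "('a \<Rightarrow> 'a \<Rightarrow> bool) \<Rightarrow> ('a \<Rightarrow> 'a \<Rightarrow> bool) \<Rightarrow> 'a \<Rightarrow> 'a \<Rightarrow> 'a \<Rightarrow> 'a \<Rightarrow> bool" where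
  "join_edges E1 E2 u w = (\<lambda>x y. E1 x y \<or> E2 x y \<or> (x = u \<and> y = w) \<or> (x = w \<and> y = u))"

definition restr :: "'a set \<Rightarrow> ('a \<Rightarrow> bit) \<Rightarrow> 'a \<Rightarrow> bit" where
  "restr A s = (\<lambda>x. if x \<in> A then s x else 0)"

end

theory Submission
  imports Defs "HOL-Library.FuncSet"
begin

text \<open>
  Over \<open>Z\<^sub>2\<close> the closed adjacency matrix \<open>N\<close> of a graph is symmetric with unit diagonal, so
  \<open>l \<cdot> N l = l \<cdot> 1\<close>; null patterns therefore have even weight, and since a configuration is
  solvable iff it is orthogonal to \<open>Ker N\<close>, the configuration \<open>1\<close> is always solvable.  If \<open>u\<close> is
  not half-activated, \<open>c\<^sub>u\<close> is solvable too, and any solutions \<open>p\<close> of \<open>1\<close> and \<open>q\<close> of \<open>c\<^sub>u\<close> agree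
  at \<open>u\<close>.  Hence \<open>a\<cdot>1 + t\<cdot>c\<^sub>u\<close> has a solution with value \<open>x\<close> at \<open>u\<close> iff \<open>t = 0\<close> when \<open>u\<close> is
  half-activated, and iff \<open>x = (a + t)\<cdot>[u always-activated]\<close> otherwise.

  A pattern \<open>s\<close> on \<open>H = G\<^sub>1uwG\<^sub>2\<close> solves the constant configuration \<open>a\<close> iff its restrictions
  solve \<open>a\<cdot>1 + s(w)\<cdot>c\<^sub>u\<close> on \<open>G\<^sub>1\<close> and \<open>a\<cdot>1 + s(u)\<cdot>c\<^sub>w\<close> on \<open>G\<^sub>2\<close>.  So the pairs \<open>(s(u), s(w))\<close>
  realised by solutions of \<open>0\<close> and of \<open>1\<close> on \<open>H\<close>, and with them the activation numbers of \<open>u\<close>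
  and \<open>w\<close> in \<open>H\<close>, are determined by the activation numbers of \<open>u\<close> in \<open>G\<^sub>1\<close> and of \<open>w\<close> in \<open>G\<^sub>2\<close>.
  For the nullities, halve each kernel along the coordinates \<open>u\<close> and \<open>w\<close>: the null patterns of
  \<open>H\<close> vanishing at \<open>u\<close> and \<open>w\<close> are exactly the sums of null patterns of \<open>G\<^sub>1\<close> vanishing at \<open>u\<close>
  and of \<open>G\<^sub>2\<close> vanishing at \<open>w\<close>.
\<close>

text \<open>Keep \<open>+\<close> and \<open>*\<close> on \<open>bit\<close> as field operations instead of rewriting them to \<open>XOR\<close>/\<open>AND\<close>.\<close>
declare add_bit_eq_xor [simp del] mult_bit_eq_and [simp del]

lemma bit_add_self [simp]: "(x::bit) + x = 0"
  by (cases x) simp_all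

lemma bit_add_eq_iff: "(a::bit) + b = c \<longleftrightarrow> a = c + b"
  by (cases b) (auto simp: add.assoc)

lemma bit_mult_self [simp]: "(x::bit) * x = x"
  by (cases x) simp_all

lemma ex_bit_iff: "(\<exists>x::bit. P x) \<longleftrightarrow> P 0 \<or> P 1"
  by (metis bit_not_zero_iff)

lemma all_bit_iff: "(\<forall>x::bit. P x) \<longleftrightarrow> P 0 \<and> P 1"
  by (metis bit_not_zero_iff)

lemma UNIV_bit: "(UNIV :: bit set) = {0, 1}"
  using bit_not_zero_iff by blast

lemma finite_UNIV_bit: "finite (UNIV :: bit set)"
  by (simp add: UNIV_bit)

section \<open>Linear algebra of \<open>N(G)\<close> over \<open>Z\<^sub>2\<close>\<close>

lemma Nmul_add: "Nmul V E (\<lambda>x. p x + q x) v = Nmul V E p v + Nmul V E q v"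
  unfolding Nmul_def by (simp add: sum.distrib[symmetric]) (rule sum.cong, auto)

lemma Nmul_mult: "Nmul V E (\<lambda>x. t * p x) v = t * Nmul V E p v"
  unfolding Nmul_def by (simp add: sum_distrib_left) (rule sum.cong, auto)

lemma solves_add:
  "solves V E p c \<Longrightarrow> solves V E q d \<Longrightarrow> solves V E (\<lambda>x. p x + q x) (\<lambda>x. c x + d x)"
  by (simp add: solves_def Nmul_add patterns_def)

lemma solves_mult: "solves V E p c \<Longrightarrow> solves V E (\<lambda>x. t * p x) (\<lambda>x. t * c x)"
  by (simp add: solves_def Nmul_mult patterns_def)

lemma solves_cong: "solves V E p c \<Longrightarrow> (\<And>v. v \<in> V \<Longrightarrow> c v = d v) \<Longrightarrow> solves V E p d"
  by (simp add: solves_def)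

lemma null_patterns_add:
  "k \<in> null_patterns V E \<Longrightarrow> l \<in> null_patterns V E \<Longrightarrow> (\<lambda>x. k x + l x) \<in> null_patterns V E"
  using solves_add[of V E k "\<lambda>_. 0" l "\<lambda>_. 0"] by (simp add: null_patterns_def)

lemma solves_diff_null:
  "solves V E p c \<Longrightarrow> solves V E q c \<Longrightarrow> (\<lambda>x. p x + q x) \<in> null_patterns V E"
  using solves_add[of V E p c q c] by (simp add: null_patterns_def)

lemma sum_mult_Nmul_commute:
  assumes sym: "\<And>x y. E x y \<Longrightarrow> E y x"
  shows "(\<Sum>v\<in>V. p v * Nmul V E q v) = (\<Sum>v\<in>V. Nmul V E p v * q v)"
proof -
  have "(\<Sum>v\<in>V. p v * Nmul V E q v) = (\<Sum>v\<in>V. \<Sum>x\<in>V. if x = v \<or> E v x then p v * q x else 0)"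
    unfolding Nmul_def by (simp add: sum_distrib_left if_distrib cong: if_cong)
  also have "\<dots> = (\<Sum>x\<in>V. \<Sum>v\<in>V. if x = v \<or> E v x then p v * q x else 0)"
    by (rule sum.swap)
  also have "\<dots> = (\<Sum>x\<in>V. \<Sum>v\<in>V. if v = x \<or> E x v then p v * q x else 0)"
    by (intro sum.cong refl) (metis sym)
  also have "\<dots> = (\<Sum>v\<in>V. Nmul V E p v * q v)"
    unfolding Nmul_def sum_distrib_right by (intro sum.cong refl) auto
  finally show ?thesis .
qed

text \<open>Over \<open>Z\<^sub>2\<close> the off-diagonal terms of a symmetric double sum cancel in pairs.\<close>
lemma sum_symmetric_bit_eq_diagonal:
  fixes g :: "'a \<Rightarrow> 'a \<Rightarrow> bit"
  assumes "finite V" and "\<And>i j. g i j = g j i"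
  shows "(\<Sum>i\<in>V. \<Sum>j\<in>V. g i j) = (\<Sum>i\<in>V. g i i)"
  using assms(1)
proof (induction V rule: finite_induct)
  case (insert a F)
  have "(\<Sum>i\<in>insert a F. \<Sum>j\<in>insert a F. g i j)
      = g a a + ((\<Sum>j\<in>F. g a j) + (\<Sum>i\<in>F. g i a)) + (\<Sum>i\<in>F. \<Sum>j\<in>F. g i j)"
    using insert by (simp add: sum.distrib algebra_simps)
  also have "(\<Sum>i\<in>F. g i a) = (\<Sum>j\<in>F. g a j)"
    using assms(2) by simp
  finally show ?case
    using insert by simp
qed simp

lemma sum_mult_Nmul_self:
  assumes "sgraph V E"
  shows "(\<Sum>v\<in>V. l v * Nmul V E l v) = (\<Sum>v\<in>V. l v)"
proof -
  have "(\<Sum>v\<in>V. l v * Nmul V E l v) = (\<Sum>v\<in>V. \<Sum>x\<in>V. if x = v \<or> E v x then l v * l x else 0)"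
    unfolding Nmul_def by (simp add: sum_distrib_left if_distrib cong: if_cong)
  also have "\<dots> = (\<Sum>v\<in>V. if v = v \<or> E v v then l v * l v else 0)"
    using assms by (intro sum_symmetric_bit_eq_diagonal) (auto simp: sgraph_def mult.commute)
  finally show ?thesis
    by simp
qed

lemma sum_mult_if_notin:
  "j \<notin> C \<Longrightarrow> (\<Sum>k\<in>C. a k * (if k = j then t else p k)) = (\<Sum>k\<in>C. a k * p k)"
  by (intro sum.cong) auto

lemma fredholm_alternative_bit:
  fixes A :: "'i \<Rightarrow> 'j \<Rightarrow> bit"
  assumes "finite R" and "finite C" and "\<nexists>p. \<forall>i\<in>R. (\<Sum>j\<in>C. A i j * p j) = c i"
  shows "\<exists>y. (\<forall>j\<in>C. (\<Sum>i\<in>R. y i * A i j) = 0) \<and> (\<Sum>i\<in>R. y i * c i) = 1"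
  using assms(2,3)
proof (induction C arbitrary: c rule: finite_induct)
  case empty
  then obtain i where "i \<in> R" "c i = 1"
    by auto
  then have "(\<Sum>i'\<in>R. (if i' = i then 1 else 0) * c i') = 1"
    using \<open>finite R\<close> by (simp add: if_distrib[of "\<lambda>z. z * _"] cong: if_cong)
  then show ?case
    by auto
next
  case (insert j C)
  have unsolvable: "\<nexists>p. \<forall>i\<in>R. (\<Sum>k\<in>C. A i k * p k) = c i + t * A i j" for t
  proof
    assume "\<exists>p. \<forall>i\<in>R. (\<Sum>k\<in>C. A i k * p k) = c i + t * A i j"
    then obtain p where "\<forall>i\<in>R. (\<Sum>k\<in>C. A i k * p k) = c i + t * A i j"
      by blast
    then have "\<forall>i\<in>R. (\<Sum>k\<in>insert j C. A i k * (if k = j then t else p k)) = c i"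
      using insert.hyps by (simp add: sum_mult_if_notin algebra_simps)
    then have "\<exists>p. \<forall>i\<in>R. (\<Sum>k\<in>insert j C. A i k * p k) = c i"
      by (intro exI[of _ "\<lambda>k. if k = j then t else p k"])
    with insert.prems show False
      by blast
  qed
  obtain y1 where y1: "\<forall>k\<in>C. (\<Sum>i\<in>R. y1 i * A i k) = 0" "(\<Sum>i\<in>R. y1 i * c i) = 1"
    using insert.IH[of c] unsolvable[of 0] by auto
  obtain y2 where y2: "\<forall>k\<in>C. (\<Sum>i\<in>R. y2 i * A i k) = 0" "(\<Sum>i\<in>R. y2 i * (c i + A i j)) = 1"
    using insert.IH[of "\<lambda>i. c i + A i j"] unsolvable[of 1] by auto
  have y2c: "(\<Sum>i\<in>R. y2 i * c i) = 1 + (\<Sum>i\<in>R. y2 i * A i j)"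
    using y2(2) by (simp add: distrib_left sum.distrib bit_add_eq_iff)
  consider "(\<Sum>i\<in>R. y1 i * A i j) = 0" | "(\<Sum>i\<in>R. y2 i * A i j) = 0"
    | "(\<Sum>i\<in>R. y1 i * A i j) = 1" "(\<Sum>i\<in>R. y2 i * A i j) = 1"
    by (cases "\<Sum>i\<in>R. y1 i * A i j"; cases "\<Sum>i\<in>R. y2 i * A i j") auto
  then show ?case
  proof cases
    case 1
    then show ?thesis using y1 by auto
  next
    case 2
    then show ?thesis using y2(1) y2c by auto
  next
    case 3
    \<comment> \<open>the two certificates fail only at column \<open>j\<close>, so their sum works\<close>
    then have "(\<forall>k\<in>insert j C. (\<Sum>i\<in>R. (y1 i + y2 i) * A i k) = 0) \<and> (\<Sum>i\<in>R. (y1 i + y2 i) * c i) = 1"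
      using y1 y2(1) y2c by (simp add: distrib_right sum.distrib)
    then show ?thesis
      by (intro exI[of _ "\<lambda>i. y1 i + y2 i"])
  qed
qed

lemma sgraph_finite: "sgraph V E \<Longrightarrow> finite V"
  by (simp add: sgraph_def)

lemma sgraph_sym: "sgraph V E \<Longrightarrow> E x y \<Longrightarrow> E y x"
  by (simp add: sgraph_def)

lemma restr_patterns [simp]: "restr A s \<in> patterns A"
  by (simp add: restr_def patterns_def)

lemma sum_null_mult_eq_0:
  assumes G: "sgraph V E" and l: "l \<in> null_patterns V E" and q: "solves V E q c"
  shows "(\<Sum>v\<in>V. l v * c v) = 0"
proof -
  have "(\<Sum>v\<in>V. l v * c v) = (\<Sum>v\<in>V. l v * Nmul V E q v)"
    using q by (intro sum.cong refl) (simp add: solves_def)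
  also have "\<dots> = (\<Sum>v\<in>V. Nmul V E l v * q v)"
    using G by (intro sum_mult_Nmul_commute) (rule sgraph_sym)
  also have "\<dots> = 0"
    using l by (simp add: null_patterns_def solves_def)
  finally show ?thesis .
qed

lemma solvable_iff_orthogonal_null:
  assumes G: "sgraph V E"
  shows "(\<exists>p. solves V E p c) \<longleftrightarrow> (\<forall>l\<in>null_patterns V E. (\<Sum>v\<in>V. l v * c v) = 0)"
proof
  show "\<exists>p. solves V E p c \<Longrightarrow> \<forall>l\<in>null_patterns V E. (\<Sum>v\<in>V. l v * c v) = 0"
    using sum_null_mult_eq_0[OF G] by blast
next
  assume orth: "\<forall>l\<in>null_patterns V E. (\<Sum>v\<in>V. l v * c v) = 0"
  show "\<exists>p. solves V E p c"
  proof (rule ccontr)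
    assume unsolvable: "\<nexists>p. solves V E p c"
    define A where "A i j = (if j = i \<or> E i j then 1 else 0 :: bit)" for i j
    have "Nmul V E (restr V p) i = (\<Sum>j\<in>V. A i j * p j)" for p i
      unfolding Nmul_def A_def restr_def by (intro sum.cong refl) auto
    then have "solves V E (restr V p) c" if "\<forall>i\<in>V. (\<Sum>j\<in>V. A i j * p j) = c i" for p
      using that by (simp add: solves_def)
    then have "\<nexists>p. \<forall>i\<in>V. (\<Sum>j\<in>V. A i j * p j) = c i"
      using unsolvable by blast
    then obtain y where y: "\<forall>j\<in>V. (\<Sum>i\<in>V. y i * A i j) = 0" "(\<Sum>i\<in>V. y i * c i) = 1"
      using fredholm_alternative_bit sgraph_finite[OF G] by blast
    have "Nmul V E (restr V y) j = (\<Sum>i\<in>V. y i * A i j)" for j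
      using G unfolding Nmul_def A_def restr_def sgraph_def by (intro sum.cong refl) auto
    then have "restr V y \<in> null_patterns V E"
      using y(1) by (simp add: null_patterns_def solves_def restr_def patterns_def)
    then have "(\<Sum>v\<in>V. restr V y v * c v) = 0"
      using orth by blast
    then show False
      using y(2) by (simp add: restr_def)
  qed
qed

lemma null_pattern_sum_eq_0:
  assumes "sgraph V E" and "l \<in> null_patterns V E"
  shows "(\<Sum>v\<in>V. l v) = 0"
  using sum_mult_Nmul_self[OF assms(1), of l] assms(2) by (simp add: null_patterns_def solves_def)

lemma ones_solvable: "sgraph V E \<Longrightarrow> \<exists>p. solves V E p ones"
  by (simp add: solvable_iff_orthogonal_null null_pattern_sum_eq_0 ones_def)

section \<open>Solutions of \<open>a\<cdot>1 + t\<cdot>c\<^sub>u\<close>\<close>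

lemma sum_mult_const_cfg:
  assumes "finite V" and "u \<in> V"
  shows "(\<Sum>v\<in>V. l v * (a + t * cfg u v)) = a * (\<Sum>v\<in>V. l v) + t * l u"
proof -
  have "(\<Sum>v\<in>V. l v * (a + t * cfg u v)) = a * (\<Sum>v\<in>V. l v) + t * (\<Sum>v\<in>V. l v * cfg u v)"
    by (simp add: algebra_simps sum.distrib sum_distrib_left)
  also have "(\<Sum>v\<in>V. l v * cfg u v) = l u"
    using assms by (simp add: cfg_def if_distrib cong: if_cong)
  finally show ?thesis .
qed

lemma solves_cfg_half_activated:
  assumes G: "sgraph V E" and u: "u \<in> V" and "half_activated V E u"
    and r: "solves V E r (\<lambda>v. a + t * cfg u v)"
  shows "t = 0"
proof -
  obtain l where l: "l \<in> null_patterns V E" "l u = 1"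
    using assms(3) by (auto simp: half_activated_def)
  have "0 = (\<Sum>v\<in>V. l v * (a + t * cfg u v))"
    using sum_null_mult_eq_0[OF G l(1) r] by simp
  also have "\<dots> = t"
    using G u l by (simp add: sum_mult_const_cfg null_pattern_sum_eq_0 sgraph_finite)
  finally show ?thesis
    by simp
qed

lemma solvable_cfg_not_half_activated:
  assumes G: "sgraph V E" and u: "u \<in> V" and "\<not> half_activated V E u"
  shows "\<exists>r. solves V E r (\<lambda>v. a + t * cfg u v)"
  using assms
  by (auto simp: solvable_iff_orthogonal_null sum_mult_const_cfg null_pattern_sum_eq_0
      half_activated_def sgraph_finite)

text \<open>\<open>p(u) = p \<cdot> N q = N p \<cdot> q = 1 \<cdot> q = q \<cdot> N q = q \<cdot> c\<^sub>u = q(u)\<close>.\<close>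
lemma ones_solution_eq_cfg_solution:
  assumes G: "sgraph V E" and u: "u \<in> V" and p: "solves V E p ones" and q: "solves V E q (cfg u)"
  shows "p u = q u"
proof -
  have "p u = (\<Sum>v\<in>V. p v * Nmul V E q v)"
    using sum_mult_const_cfg[of V u p 0 1] G u q by (simp add: sgraph_finite solves_def)
  also have "\<dots> = (\<Sum>v\<in>V. Nmul V E p v * q v)"
    using G by (intro sum_mult_Nmul_commute) (rule sgraph_sym)
  also have "\<dots> = (\<Sum>v\<in>V. q v * Nmul V E q v)"
    using p sum_mult_Nmul_self[OF G, of q] by (simp add: solves_def ones_def)
  also have "\<dots> = q u"
    using sum_mult_const_cfg[of V u q 0 1] G u q by (simp add: sgraph_finite solves_def)
  finally show ?thesis .
qed

lemma ones_solution_not_half_activated: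
  assumes "\<not> half_activated V E u" and p: "solves V E p ones"
  shows "p u = of_bool (activation V E u = 1)"
proof (cases "activation V E u = 1")
  case True
  then show ?thesis
    using p by (simp add: activation_def always_activated_def split: if_splits)
next
  case False
  then have "\<not> (\<forall>p. solves V E p ones \<longrightarrow> p u = 1)"
    using assms(1) by (simp add: activation_def always_activated_def split: if_splits)
  then obtain p' where "solves V E p' ones" "p' u = 0"
    by auto
  then show ?thesis
    using False assms solves_diff_null[OF p] by (fastforce simp: half_activated_def)
qed

lemma solution_not_half_activated:
  assumes G: "sgraph V E" and u: "u \<in> V" and nh: "\<not> half_activated V E u"
    and r: "solves V E r (\<lambda>v. a + t * cfg u v)"
  shows "r u = (a + t) * of_bool (activation V E u = 1)"
proof -
  obtain p where p: "solves V E p ones"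
    using ones_solvable[OF G] by blast
  obtain q where "solves V E q (\<lambda>v. 0 + 1 * cfg u v)"
    using solvable_cfg_not_half_activated[OF G u nh] by blast
  then have q: "solves V E q (cfg u)"
    by (simp add: solves_def)
  have "solves V E (\<lambda>x. r x + a * p x + t * q x) (\<lambda>x. (a + t * cfg u x) + a * ones x + t * cfg u x)"
    by (intro solves_add solves_mult r p q)
  then have "(\<lambda>x. r x + a * p x + t * q x) \<in> null_patterns V E"
    by (simp add: null_patterns_def solves_def ones_def algebra_simps)
  then have "r u = a * p u + t * q u"
    using nh by (auto simp: half_activated_def bit_add_eq_iff add.assoc)
  then show ?thesis
    using ones_solution_eq_cfg_solution[OF G u p q] ones_solution_not_half_activated[OF nh p]
    by (simp add: algebra_simps)
qed

lemma activation_eq_minus_one_iff: "activation V E v = -1 \<longleftrightarrow> half_activated V E v"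
  by (simp add: activation_def)

lemma activation_eq_solutions:
  "activation V E v =
    (if \<exists>l. solves V E l (\<lambda>_. 0) \<and> l v = 1 then -1
     else if \<forall>s. solves V E s (\<lambda>_. 1) \<longrightarrow> s v = 1 then 1 else 0)"
  by (simp add: activation_def half_activated_def always_activated_def null_patterns_def ones_def)

definition solution_value :: "'a set \<Rightarrow> ('a \<Rightarrow> 'a \<Rightarrow> bool) \<Rightarrow> 'a \<Rightarrow> bit \<Rightarrow> bit \<Rightarrow> bit \<Rightarrow> bool" where
  "solution_value V E u a t x \<longleftrightarrow> (\<exists>r. solves V E r (\<lambda>v. a + t * cfg u v) \<and> r u = x)"

lemma solution_value_half_activated:
  assumes G: "sgraph V E" and "half_activated V E u"
  shows "solution_value V E u a 0 x"
proof -
  obtain l where l: "l \<in> null_patterns V E" "l u = 1"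
    using assms(2) by (auto simp: half_activated_def)
  obtain p where p: "solves V E p ones"
    using ones_solvable[OF G] by blast
  let ?r = "\<lambda>v. a * p v + (a * p u + x) * l v"
  have "solves V E ?r (\<lambda>v. a * ones v + (a * p u + x) * 0)"
    using l(1) by (intro solves_add solves_mult p) (simp add: null_patterns_def)
  then have "solves V E ?r (\<lambda>v. a + 0 * cfg u v)"
    by (rule solves_cong) (simp add: ones_def)
  moreover have "?r u = x"
    using l(2) by simp
  ultimately show ?thesis
    unfolding solution_value_def by blast
qed

lemma solution_value_iff:
  assumes G: "sgraph V E" and u: "u \<in> V"
  shows "solution_value V E u a t x \<longleftrightarrow>
    (if activation V E u = -1 then t = 0 else x = (a + t) * of_bool (activation V E u = 1))"
proof (cases "half_activated V E u")
  case True
  then show ?thesis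
    using solution_value_half_activated[OF G True] solves_cfg_half_activated[OF G u True]
    by (auto simp: activation_eq_minus_one_iff solution_value_def)
next
  case False
  obtain r where "solves V E r (\<lambda>v. a + t * cfg u v)"
    using solvable_cfg_not_half_activated[OF G u False] by blast
  then have "solution_value V E u a t x \<longleftrightarrow> x = (a + t) * of_bool (activation V E u = 1)"
    unfolding solution_value_def using solution_not_half_activated[OF G u False] by blast
  then show ?thesis
    using False by (simp add: activation_eq_minus_one_iff)
qed

section \<open>Counting null patterns\<close>

text \<open>Adding a fixed \<open>k\<^sub>0\<close> with \<open>k\<^sub>0 v = 1\<close> swaps the patterns with value \<open>0\<close> and \<open>1\<close> at \<open>v\<close>.\<close>
lemma card_split_at_coordinate:
  fixes S :: "('a \<Rightarrow> bit) set"
  assumes fin: "finite S" and add: "\<And>k l. k \<in> S \<Longrightarrow> l \<in> S \<Longrightarrow> (\<lambda>x. k x + l x) \<in> S"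
  shows "card S = 2 ^ of_bool (\<exists>k\<in>S. k v = 1) * card {k\<in>S. k v = 0}"
proof (cases "\<exists>k\<in>S. k v = 1")
  case False
  moreover have "{k\<in>S. k v = 0} = S"
    using False by auto
  ultimately show ?thesis
    by (simp only: of_bool_eq(1) power_0 mult_1)
next
  case True
  then obtain k0 where k0: "k0 \<in> S" "k0 v = 1"
    by blast
  let ?S0 = "{k\<in>S. k v = 0}" and ?S1 = "{k\<in>S. k v = 1}" and ?shift = "\<lambda>k x. k x + k0 x"
  have image: "?shift ` ?S0 = ?S1"
  proof
    show "?shift ` ?S0 \<subseteq> ?S1"
      using k0 add by auto
    show "?S1 \<subseteq> ?shift ` ?S0"
    proof
      fix k assume "k \<in> ?S1"
      show "k \<in> ?shift ` ?S0"
      proof (rule rev_image_eqI)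
        show "?shift k \<in> ?S0"
          using \<open>k \<in> ?S1\<close> k0 add by auto
        show "k = ?shift (?shift k)"
          by (simp add: fun_eq_iff add.assoc)
      qed
    qed
  qed
  have "inj_on ?shift ?S0"
    by (rule inj_onI) (simp add: fun_eq_iff)
  then have "card ?S1 = card ?S0"
    unfolding image[symmetric] by (rule card_image)
  moreover have "card (?S0 \<union> ?S1) = card ?S0 + card ?S1"
    using fin by (intro card_Un_disjoint) auto
  moreover have "?S0 \<union> ?S1 = S"
    by auto
  ultimately show ?thesis
    using True by simp
qed

lemma vector_space_bit_fun: "vector_space (\<lambda>(c::bit) (f::'a \<Rightarrow> bit) x. c * f x)"
  unfolding vector_space_def by (auto simp: algebra_simps fun_eq_iff)

lemma card_bit_fun_subspace:
  fixes S :: "('a \<Rightarrow> bit) set"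
  assumes fin: "finite S" and zero: "(\<lambda>_. 0) \<in> S"
    and add: "\<And>k l. k \<in> S \<Longrightarrow> l \<in> S \<Longrightarrow> (\<lambda>x. k x + l x) \<in> S"
  shows "card S = 2 ^ vector_space.dim (\<lambda>(c::bit) f x. c * f x) S"
proof -
  interpret V: vector_space "\<lambda>(c::bit) (f::'a \<Rightarrow> bit) x. c * f x"
    by (rule vector_space_bit_fun)
  have "(\<lambda>x. c * k x) \<in> S" if "k \<in> S" for c k
    using zero that by (cases c) simp_all
  then have "V.subspace S"
    using zero add by (simp add: V.subspace_def plus_fun_def zero_fun_def)
  obtain B where B: "B \<subseteq> S" "V.independent B" "S \<subseteq> V.span B" "card B = V.dim S"
    by (rule V.basis_exists)
  have finB: "finite B"
    using B(1) fin finite_subset by blast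
  have spanB: "S = range (\<lambda>c. \<Sum>v\<in>B. (\<lambda>x. c v * v x))"
    using V.span_subspace[OF B(1,3) \<open>V.subspace S\<close>] V.span_finite[OF finB] by simp
  let ?comb = "\<lambda>c. \<Sum>v\<in>B. (\<lambda>x. c v * v x)"
  have inj: "inj_on ?comb (B \<rightarrow>\<^sub>E UNIV)"
  proof (rule inj_onI)
    fix c d assume c: "c \<in> B \<rightarrow>\<^sub>E UNIV" and d: "d \<in> B \<rightarrow>\<^sub>E UNIV" and eq: "?comb c = ?comb d"
    have "(\<Sum>v\<in>B. (\<lambda>x. (c v + d v) * v x)) = (\<Sum>v\<in>B. (\<lambda>x. c v * v x) + (\<lambda>x. d v * v x))"
      by (simp add: distrib_right plus_fun_def)
    also have "\<dots> = ?comb c + ?comb d"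
      by (rule sum.distrib)
    also have "\<dots> = 0"
      using eq by (simp add: fun_eq_iff)
    finally have "\<forall>v\<in>B. c v + d v = 0"
      using V.independentD[OF B(2) finB order_refl, of "\<lambda>v. c v + d v"] by blast
    then show "c = d"
      using c d by (auto simp: bit_add_eq_iff intro: PiE_ext)
  qed
  have image: "?comb ` (B \<rightarrow>\<^sub>E UNIV) = S"
  proof
    show "?comb ` (B \<rightarrow>\<^sub>E UNIV) \<subseteq> S"
      unfolding spanB by blast
    show "S \<subseteq> ?comb ` (B \<rightarrow>\<^sub>E UNIV)"
    proof
      fix s assume "s \<in> S"
      then obtain c where c: "s = ?comb c"
        unfolding spanB by blast
      have "?comb (restrict c B) \<in> ?comb ` (B \<rightarrow>\<^sub>E UNIV)"
        by (intro imageI) (simp only: restrict_PiE Pi_UNIV UNIV_I)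
      moreover have "?comb (restrict c B) = ?comb c"
        by (intro sum.cong) auto
      ultimately show "s \<in> ?comb ` (B \<rightarrow>\<^sub>E UNIV)"
        unfolding c by (simp only:)
    qed
  qed
  have "card S = card (B \<rightarrow>\<^sub>E (UNIV :: bit set))"
    using card_image[OF inj] by (simp only: image)
  also have "\<dots> = 2 ^ card B"
    using finB by (simp add: card_PiE UNIV_bit numeral_2_eq_2)
  finally show ?thesis
    using B(4) by simp
qed

lemma finite_patterns: "finite V \<Longrightarrow> finite (patterns V)"
  using finite_set_of_finite_funs[of V "UNIV :: bit set" 0] by (simp add: patterns_def finite_UNIV_bit)

lemma finite_null_patterns: "sgraph V E \<Longrightarrow> finite (null_patterns V E)"
  by (rule finite_subset[OF _ finite_patterns[OF sgraph_finite]])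
    (auto simp: null_patterns_def solves_def)

lemma card_null_patterns:
  assumes "sgraph V E"
  shows "card (null_patterns V E) = 2 ^ nullity V E"
  unfolding nullity_def
proof (rule card_bit_fun_subspace)
  show "finite (null_patterns V E)"
    using assms by (rule finite_null_patterns)
  show "(\<lambda>_. 0) \<in> null_patterns V E"
    by (simp add: null_patterns_def solves_def patterns_def Nmul_def)
qed (rule null_patterns_add)

section \<open>Joining two graphs by an edge\<close>

lemma join_edges_swap: "join_edges E2 E1 w u = join_edges E1 E2 u w"
  by (auto simp: join_edges_def fun_eq_iff)

locale edge_join =
  fixes V1 V2 :: "'a set" and E1 E2 :: "'a \<Rightarrow> 'a \<Rightarrow> bool" and u w :: 'a
  assumes G1: "sgraph V1 E1" and G2: "sgraph V2 E2"
    and disjoint: "V1 \<inter> V2 = {}" and u: "u \<in> V1" and w: "w \<in> V2"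
begin

abbreviation "VH \<equiv> V1 \<union> V2"
abbreviation "EH \<equiv> join_edges E1 E2 u w"

lemma swap: "edge_join V2 V1 E2 E1 w u"
  using G1 G2 disjoint u w by unfold_locales auto

lemma sgraph_join: "sgraph VH EH"
  using G1 G2 disjoint u w unfolding sgraph_def join_edges_def by auto

lemma Nmul_join_left:
  assumes v: "v \<in> V1"
  shows "Nmul VH EH s v = Nmul V1 E1 (restr V1 s) v + s w * cfg u v"
proof -
  have edges: "EH v x \<longleftrightarrow> (if x \<in> V1 then E1 v x else v = u \<and> x = w)" if "x \<in> VH" for x
    using that v G1 G2 disjoint u w unfolding join_edges_def sgraph_def by auto
  have "Nmul VH EH s v =
      (\<Sum>x\<in>V1. if x = v \<or> EH v x then s x else 0) + (\<Sum>x\<in>V2. if x = v \<or> EH v x then s x else 0)"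
    unfolding Nmul_def using G1 G2 disjoint by (simp add: sum.union_disjoint sgraph_finite)
  also have "(\<Sum>x\<in>V1. if x = v \<or> EH v x then s x else 0) = Nmul V1 E1 (restr V1 s) v"
    unfolding Nmul_def by (intro sum.cong refl) (simp add: edges restr_def)
  also have "(\<Sum>x\<in>V2. if x = v \<or> EH v x then s x else 0) = (\<Sum>x\<in>V2. if x = w then s w * cfg u v else 0)"
    using v disjoint by (intro sum.cong refl) (auto simp: edges cfg_def)
  also have "\<dots> = s w * cfg u v"
    using G2 w by (simp add: sgraph_finite)
  finally show ?thesis .
qed

lemma Nmul_join_right: "v \<in> V2 \<Longrightarrow> Nmul VH EH s v = Nmul V2 E2 (restr V2 s) v + s u * cfg w v"
  using edge_join.Nmul_join_left[OF swap] by (simp add: join_edges_swap Un_commute)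

lemma solves_join_iff:
  "solves VH EH s (\<lambda>_. a) \<longleftrightarrow> s \<in> patterns VH \<and>
     solves V1 E1 (restr V1 s) (\<lambda>v. a + s w * cfg u v) \<and> solves V2 E2 (restr V2 s) (\<lambda>v. a + s u * cfg w v)"
proof -
  have "v \<in> V1 \<Longrightarrow> Nmul VH EH s v = a \<longleftrightarrow> Nmul V1 E1 (restr V1 s) v = a + s w * cfg u v"
    "v \<in> V2 \<Longrightarrow> Nmul VH EH s v = a \<longleftrightarrow> Nmul V2 E2 (restr V2 s) v = a + s u * cfg w v" for v
    by (simp_all add: Nmul_join_left Nmul_join_right bit_add_eq_iff)
  then show ?thesis
    by (simp add: solves_def ball_Un)
qed

lemma restr_join_left: "k1 \<in> patterns V1 \<Longrightarrow> k2 \<in> patterns V2 \<Longrightarrow> restr V1 (\<lambda>x. k1 x + k2 x) = k1"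
  using disjoint by (auto simp: fun_eq_iff restr_def patterns_def)

lemma restr_join_right: "k1 \<in> patterns V1 \<Longrightarrow> k2 \<in> patterns V2 \<Longrightarrow> restr V2 (\<lambda>x. k1 x + k2 x) = k2"
  using disjoint by (auto simp: fun_eq_iff restr_def patterns_def)

lemma restr_join: "s \<in> patterns VH \<Longrightarrow> (\<lambda>x. restr V1 s x + restr V2 s x) = s"
  using disjoint by (auto simp: fun_eq_iff restr_def patterns_def)

lemma solves_join_sum:
  assumes "solves V1 E1 r1 (\<lambda>v. a + r2 w * cfg u v)" and "solves V2 E2 r2 (\<lambda>v. a + r1 u * cfg w v)"
  shows "solves VH EH (\<lambda>x. r1 x + r2 x) (\<lambda>_. a)"
proof -
  have "r1 \<in> patterns V1" "r2 \<in> patterns V2"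
    using assms by (simp_all add: solves_def)
  moreover have "r1 w = 0" "r2 u = 0"
    using calculation disjoint u w by (auto simp: patterns_def)
  ultimately show ?thesis
    using assms by (simp add: solves_join_iff restr_join_left restr_join_right) (auto simp: patterns_def)
qed

lemma solution_values_join:
  "(\<exists>s. solves VH EH s (\<lambda>_. a) \<and> s u = x \<and> s w = y) \<longleftrightarrow>
     solution_value V1 E1 u a y x \<and> solution_value V2 E2 w a x y"
proof
  assume "\<exists>s. solves VH EH s (\<lambda>_. a) \<and> s u = x \<and> s w = y"
  then show "solution_value V1 E1 u a y x \<and> solution_value V2 E2 w a x y"
    using u w unfolding solution_value_def solves_join_iff by (auto simp: restr_def)
next
  assume "solution_value V1 E1 u a y x \<and> solution_value V2 E2 w a x y"
  then obtain r1 r2 where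
    r1: "solves V1 E1 r1 (\<lambda>v. a + y * cfg u v)" "r1 u = x" and
    r2: "solves V2 E2 r2 (\<lambda>v. a + x * cfg w v)" "r2 w = y"
    unfolding solution_value_def by blast
  have "r1 w = 0" "r2 u = 0"
    using r1(1) r2(1) disjoint u w by (auto simp: solves_def patterns_def)
  then show "\<exists>s. solves VH EH s (\<lambda>_. a) \<and> s u = x \<and> s w = y"
    using solves_join_sum[of r1 a r2] r1 r2 by auto
qed

lemma activation_join_left:
  "activation VH EH u =
    (if \<exists>y. solution_value V1 E1 u 0 y 1 \<and> solution_value V2 E2 w 0 1 y then -1
     else if \<forall>x y. solution_value V1 E1 u 1 y x \<and> solution_value V2 E2 w 1 x y \<longrightarrow> x = 1 then 1
     else 0)"
proof -
  have "(\<exists>l. solves VH EH l (\<lambda>_. 0) \<and> l u = 1) \<longleftrightarrow>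
      (\<exists>y. \<exists>l. solves VH EH l (\<lambda>_. 0) \<and> l u = 1 \<and> l w = y)"
    by blast
  moreover have "(\<forall>s. solves VH EH s (\<lambda>_. 1) \<longrightarrow> s u = 1) \<longleftrightarrow>
      (\<forall>x y. (\<exists>s. solves VH EH s (\<lambda>_. 1) \<and> s u = x \<and> s w = y) \<longrightarrow> x = 1)"
    by blast
  ultimately show ?thesis
    by (simp only: activation_eq_solutions solution_values_join)
qed

lemma activation_join_right:
  "activation VH EH w =
    (if \<exists>x. solution_value V2 E2 w 0 x 1 \<and> solution_value V1 E1 u 0 1 x then -1
     else if \<forall>y x. solution_value V2 E2 w 1 x y \<and> solution_value V1 E1 u 1 y x \<longrightarrow> y = 1 then 1
     else 0)"
  using edge_join.activation_join_left[OF swap] by (simp add: join_edges_swap Un_commute)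

lemma solves_join_ones:
  assumes "solves VH EH s ones"
  shows "solution_value V1 E1 u 1 (s w) (s u) \<and> solution_value V2 E2 w 1 (s u) (s w) \<and>
    solves V1 E1 (restr V1 s) (if s w = 1 then cbar u else ones) \<and>
    solves V2 E2 (restr V2 s) (if s u = 1 then cbar w else ones)"
proof -
  have "solution_value V1 E1 u 1 (s w) (s u) \<and> solution_value V2 E2 w 1 (s u) (s w)"
    using assms solution_values_join[of 1 "s u" "s w"] by (auto simp: ones_def)
  moreover have "solves V1 E1 (restr V1 s) (if s w = 1 then cbar u else ones) \<and>
      solves V2 E2 (restr V2 s) (if s u = 1 then cbar w else ones)"
    using assms unfolding ones_def solves_join_iff
    by (auto elim!: solves_cong simp: cbar_def add.commute)
  ultimately show ?thesis
    by blast
qed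

lemma card_null_join_vanishing:
  "card {l\<in>null_patterns VH EH. l u = 0 \<and> l w = 0} =
     card {k\<in>null_patterns V1 E1. k u = 0} * card {k\<in>null_patterns V2 E2. k w = 0}"
proof -
  let ?K = "{l\<in>null_patterns VH EH. l u = 0 \<and> l w = 0}"
  let ?K1 = "{k\<in>null_patterns V1 E1. k u = 0}" and ?K2 = "{k\<in>null_patterns V2 E2. k w = 0}"
  have null: "l \<in> ?K \<longleftrightarrow> l \<in> patterns VH \<and> restr V1 l \<in> ?K1 \<and> restr V2 l \<in> ?K2" for l
    using u w by (auto simp: null_patterns_def solves_join_iff restr_def)
  have "bij_betw (\<lambda>l. (restr V1 l, restr V2 l)) ?K (?K1 \<times> ?K2)"
  proof (rule bij_betw_byWitness[where f' = "\<lambda>(k1, k2) x. k1 x + k2 x"])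
    have "l \<in> patterns VH" and restr: "(restr V1 l, restr V2 l) \<in> ?K1 \<times> ?K2" if "l \<in> ?K" for l
      using that unfolding null by blast+
    then show "\<forall>l\<in>?K. (\<lambda>(k1, k2) x. k1 x + k2 x) (restr V1 l, restr V2 l) = l"
      using restr_join by simp
    show "(\<lambda>l. (restr V1 l, restr V2 l)) ` ?K \<subseteq> ?K1 \<times> ?K2"
      using restr by (intro image_subsetI)
    have "k1 \<in> patterns V1" "k2 \<in> patterns V2" if "k1 \<in> ?K1" "k2 \<in> ?K2" for k1 k2
      using that by (simp_all add: null_patterns_def solves_def)
    then show "\<forall>k\<in>?K1 \<times> ?K2. (\<lambda>l. (restr V1 l, restr V2 l)) ((\<lambda>(k1, k2) x. k1 x + k2 x) k) = k"
      by (simp add: restr_join_left restr_join_right)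
    have "(\<lambda>x. k1 x + k2 x) \<in> ?K" if "k1 \<in> ?K1" "k2 \<in> ?K2" for k1 k2
    proof -
      have p: "k1 \<in> patterns V1" "k2 \<in> patterns V2"
        using that by (simp_all add: null_patterns_def solves_def)
      then have "(\<lambda>x. k1 x + k2 x) \<in> patterns VH"
        by (auto simp: patterns_def)
      then show ?thesis
        unfolding null using that p by (simp add: restr_join_left restr_join_right)
    qed
    then show "(\<lambda>(k1, k2) x. k1 x + k2 x) ` (?K1 \<times> ?K2) \<subseteq> ?K"
      by (intro image_subsetI) (clarsimp simp only: mem_Times_iff case_prod_beta)
  qed
  then show ?thesis
    by (simp add: bij_betw_same_card card_cartesian_product)
qed

lemma ex_null_pattern_join_iff:
  "(\<exists>l\<in>null_patterns VH EH. l u = 1) \<longleftrightarrow>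
     (\<exists>y. solution_value V1 E1 u 0 y 1 \<and> solution_value V2 E2 w 0 1 y)"
  "(\<exists>l\<in>{l\<in>null_patterns VH EH. l u = 0}. l w = 1) \<longleftrightarrow>
     solution_value V1 E1 u 0 1 0 \<and> solution_value V2 E2 w 0 0 1"
  unfolding null_patterns_def using solution_values_join[of 0] by auto

text \<open>Halve \<open>Ker N(H)\<close> along \<open>u\<close> and then \<open>w\<close>, and \<open>Ker N(G\<^sub>1)\<close>, \<open>Ker N(G\<^sub>2)\<close> along \<open>u\<close>, \<open>w\<close>:
  the remaining spaces correspond by \<open>card_null_join_vanishing\<close>.\<close>
lemma nullity_join:
  "nullity VH EH + of_bool (half_activated V1 E1 u) + of_bool (half_activated V2 E2 w) =
     nullity V1 E1 + nullity V2 E2 +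
     of_bool (\<exists>y. solution_value V1 E1 u 0 y 1 \<and> solution_value V2 E2 w 0 1 y) +
     of_bool (solution_value V1 E1 u 0 1 0 \<and> solution_value V2 E2 w 0 0 1)"
proof -
  let ?K = "null_patterns VH EH" and ?K1 = "null_patterns V1 E1" and ?K2 = "null_patterns V2 E2"
  let ?Ku = "{l\<in>?K. l u = 0}"
  have finK: "finite ?K"
    using sgraph_join by (rule finite_null_patterns)
  have "card ?K = 2 ^ of_bool (\<exists>y. solution_value V1 E1 u 0 y 1 \<and> solution_value V2 E2 w 0 1 y) *
      card ?Ku"
    unfolding ex_null_pattern_join_iff(1)[symmetric] using finK
    by (rule card_split_at_coordinate) (rule null_patterns_add)
  moreover have "card ?Ku = 2 ^ of_bool (solution_value V1 E1 u 0 1 0 \<and> solution_value V2 E2 w 0 0 1) *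
      card {l\<in>?Ku. l w = 0}"
    unfolding ex_null_pattern_join_iff(2)[symmetric] using finK
    by (intro card_split_at_coordinate) (auto intro: null_patterns_add)
  moreover have "{l\<in>?Ku. l w = 0} = {l\<in>?K. l u = 0 \<and> l w = 0}"
    by auto
  moreover have "card ?K1 = 2 ^ of_bool (half_activated V1 E1 u) * card {k\<in>?K1. k u = 0}"
    unfolding half_activated_def using finite_null_patterns[OF G1]
    by (rule card_split_at_coordinate) (rule null_patterns_add)
  moreover have "card ?K2 = 2 ^ of_bool (half_activated V2 E2 w) * card {k\<in>?K2. k w = 0}"
    unfolding half_activated_def using finite_null_patterns[OF G2]
    by (rule card_split_at_coordinate) (rule null_patterns_add)
  ultimately have "(2::nat) ^ nullity VH EH * 2 ^ of_bool (half_activated V1 E1 u) * 2 ^ of_bool (half_activated V2 E2 w) =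
      2 ^ of_bool (\<exists>y. solution_value V1 E1 u 0 y 1 \<and> solution_value V2 E2 w 0 1 y) *
      2 ^ of_bool (solution_value V1 E1 u 0 1 0 \<and> solution_value V2 E2 w 0 0 1) *
      2 ^ nullity V1 E1 * 2 ^ nullity V2 E2"
    using G1 G2 sgraph_join
    by (simp add: card_null_patterns card_null_join_vanishing)
  then have "(2::nat) ^ (nullity VH EH + of_bool (half_activated V1 E1 u) + of_bool (half_activated V2 E2 w)) =
      2 ^ (nullity V1 E1 + nullity V2 E2 +
        of_bool (\<exists>y. solution_value V1 E1 u 0 y 1 \<and> solution_value V2 E2 w 0 1 y) +
        of_bool (solution_value V1 E1 u 0 1 0 \<and> solution_value V2 E2 w 0 0 1))"
    by (simp add: power_add)
  then show ?thesis
    by (rule power_inject_exp[THEN iffD1, rotated]) simp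
qed

end

theorem theorem3p3:
  fixes V1 V2 :: "'a set" and E1 E2 :: "'a \<Rightarrow> 'a \<Rightarrow> bool" and u w :: 'a
  assumes G1: "sgraph V1 E1" and G2: "sgraph V2 E2"
    and disj: "V1 \<inter> V2 = {}" and u: "u \<in> V1" and w: "w \<in> V2"
  defines "VH \<equiv> V1 \<union> V2"
    and "EH \<equiv> join_edges E1 E2 u w"
    and "a1 \<equiv> activation V1 E1 u"
    and "a2 \<equiv> activation V2 E2 w"
    and "dnu \<equiv> int (nullity (V1 \<union> V2) (join_edges E1 E2 u w)) - int (nullity V1 E1) - int (nullity V2 E2)"
  shows
   \<comment> \<open>(i) (0,0)\<close>
   "(a1 = 0 \<and> a2 = 0 \<longrightarrow>
      activation VH EH u = 0 \<and> activation VH EH w = 0 \<and> dnu = 0 \<and>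
      (\<forall>s. solves VH EH s ones \<longrightarrow>
         solves V1 E1 (restr V1 s) ones \<and> solves V2 E2 (restr V2 s) ones))
   \<and> \<comment> \<open>(ii) (0,1)\<close>
   (a1 = 0 \<and> a2 = 1 \<longrightarrow>
      activation VH EH u = 0 \<and> activation VH EH w = 1 \<and> dnu = 0 \<and>
      (\<forall>s. solves VH EH s ones \<longrightarrow>
         solves V1 E1 (restr V1 s) (cbar u) \<and> solves V2 E2 (restr V2 s) ones))
   \<and> \<comment> \<open>(iii) (0,-1)\<close>
   (a1 = 0 \<and> a2 = -1 \<longrightarrow>
      activation VH EH u = 0 \<and> activation VH EH w = -1 \<and> dnu = 0 \<and>
      (\<forall>s. solves VH EH s ones \<longrightarrow>
         solves V2 E2 (restr V2 s) ones \<and>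
         (s w = 0 \<longrightarrow> solves V1 E1 (restr V1 s) ones) \<and>
         (s w = 1 \<longrightarrow> solves V1 E1 (restr V1 s) (cbar u))))
   \<and> \<comment> \<open>(iv) (1,1)\<close>
   (a1 = 1 \<and> a2 = 1 \<longrightarrow>
      activation VH EH u = -1 \<and> activation VH EH w = -1 \<and> dnu = 1 \<and>
      (\<forall>s. solves VH EH s ones \<longrightarrow>
         (s u = 0 \<and> s w = 1 \<and> solves V1 E1 (restr V1 s) (cbar u) \<and> solves V2 E2 (restr V2 s) ones)
       \<or> (s u = 1 \<and> s w = 0 \<and> solves V1 E1 (restr V1 s) ones \<and> solves V2 E2 (restr V2 s) (cbar w))))
   \<and> \<comment> \<open>(v) (1,-1)\<close>
   (a1 = 1 \<and> a2 = -1 \<longrightarrow>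
      activation VH EH u = 0 \<and> activation VH EH w = 1 \<and> dnu = -1 \<and>
      (\<forall>s. solves VH EH s ones \<longrightarrow>
         solves V1 E1 (restr V1 s) (cbar u) \<and> solves V2 E2 (restr V2 s) ones))
   \<and> \<comment> \<open>(vi) (-1,-1)\<close>
   (a1 = -1 \<and> a2 = -1 \<longrightarrow>
      activation VH EH u = 0 \<and> activation VH EH w = 0 \<and> dnu = -2 \<and>
      (\<forall>s. solves VH EH s ones \<longrightarrow>
         solves V1 E1 (restr V1 s) ones \<and> solves V2 E2 (restr V2 s) ones))
   \<and> \<comment> \<open>(ii') (1,0): (ii) with roles interchanged\<close>
   (a1 = 1 \<and> a2 = 0 \<longrightarrow>
      activation VH EH w = 0 \<and> activation VH EH u = 1 \<and> dnu = 0 \<and>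
      (\<forall>s. solves VH EH s ones \<longrightarrow>
         solves V2 E2 (restr V2 s) (cbar w) \<and> solves V1 E1 (restr V1 s) ones))
   \<and> \<comment> \<open>(iii') (-1,0)\<close>
   (a1 = -1 \<and> a2 = 0 \<longrightarrow>
      activation VH EH w = 0 \<and> activation VH EH u = -1 \<and> dnu = 0 \<and>
      (\<forall>s. solves VH EH s ones \<longrightarrow>
         solves V1 E1 (restr V1 s) ones \<and>
         (s u = 0 \<longrightarrow> solves V2 E2 (restr V2 s) ones) \<and>
         (s u = 1 \<longrightarrow> solves V2 E2 (restr V2 s) (cbar w))))
   \<and> \<comment> \<open>(v') (-1,1)\<close>
   (a1 = -1 \<and> a2 = 1 \<longrightarrow>
      activation VH EH w = 0 \<and> activation VH EH u = 1 \<and> dnu = -1 \<and>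
      (\<forall>s. solves VH EH s ones \<longrightarrow>
         solves V2 E2 (restr V2 s) (cbar w) \<and> solves V1 E1 (restr V1 s) ones))
   \<and> \<comment> \<open>compact form\<close>
   dnu = (if a1 = -1 \<and> a2 = -1 then -2 else a1 * a2)
   \<and> activation VH EH u mod 3 = (a1 * (1 + a2)) mod 3
   \<and> activation VH EH w mod 3 = (a2 * (1 + a1)) mod 3"
proof -
  interpret edge_join V1 V2 E1 E2 u w
    using G1 G2 disj u w by unfold_locales
  note value_iff = solution_value_iff[OF G1 u, folded a1_def] solution_value_iff[OF G2 w, folded a2_def]
  have half: "half_activated V1 E1 u \<longleftrightarrow> a1 = -1" "half_activated V2 E2 w \<longleftrightarrow> a2 = -1"
    by (simp_all add: a1_def a2_def activation_eq_minus_one_iff)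
  have "a1 \<in> {-1, 0, 1}" "a2 \<in> {-1, 0, 1}"
    by (auto simp: a1_def a2_def activation_def)
  moreover note nullity_join[unfolded value_iff half]
    and activation_join_left[unfolded value_iff] activation_join_right[unfolded value_iff]
  \<comment> \<open>for each of the nine pairs \<open>(a1, a2)\<close> every claim is now a computation over \<open>bit\<close>\<close>
  ultimately show ?thesis
    unfolding dnu_def VH_def EH_def
    by (elim insertE emptyE)
      (auto simp: value_iff ex_bit_iff all_bit_iff dest!: solves_join_ones split: if_split_asm)
qed

end
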